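(* Let $A=\mathbb{C}[t]\oplus\mathbb{C}[t]\,\partial_t$, graded by $\deg t=0$, $\deg\partial_t=-1$, with the degree $m=1$ commutative $BV_\infty$ structure $\Delta=\Delta_0+\hbar\Delta_1$ given by $\Delta_0(g(t))=0$, $\Delta_0(g(t)\partial_t)=t\,g(t)$, $\Delta_1(g(t))=0$, $\Delta_1(g(t)\partial_t)=g'(t)$ (and $\Delta_k=0$ for $k\ge2$). Let $B=\mathbb{C}$ with $\Delta'=0$. Define $f=\sum_{i\ge0}\hbar^if_i:A[[\hbar]]\to\mathbb{C}[[\hbar]]$ ($\mathbb{C}[[\hbar]]$-linearly) by $$f_i(t^k)=(-1)^i\,\delta_{k,2i}\,(2i-1)!!,\qquad f_i(g(t)\partial_t)=0,$$ (with $(-1)!!=1$), i.e. $f(t^{2i})=(2i-1)!!(-\hbar)^i$, $f(t^{2i+1})=0$. Then $f$ is a $BV_\infty$ quasi-isomorphism from $(A,\Delta)$ to $(B,\Delta')$. Moreover $f$ is compatible with the pairings: if the pairing on $H(A((\hbar)),\Delta)$ is given by $(t^{2k},t^{2l})=(-1)^k\hbar^{k+l}(2k-1)!!(2l-1)!!$ with all other pairings of monomials $t^a,t^b$ vanishing (extended by the sesquilinearity rule $(g(\hbar)\alpha,\beta)=(\alpha,g(-\hbar)\beta)=g(\hbar)(\alpha,\beta)$), and the pairing on $B[[\hbar]]$ is $(p(\hbar)a,q(\hbar)b)=p(\hbar)q(-\hbar)ab$, then $(f(\alpha),f(\beta))_B=(\alpha,\beta)_A$ for all $\alpha,\beta$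.
   Context: A degree $m$ commutative $BV_\infty$ algebra is a graded commutative unital algebra $A$ with a degree one $\mathbb{C}[[\hbar]]$-linear operator $\Delta=\sum_k\Delta_k\hbar^k$ on $A[[\hbar]]$ ($\hbar$ of degree $1-m$) with $\Delta(1)=0$, $\Delta^2=0$, and $\mathrm{ad}_{\alpha_k}\cdots\mathrm{ad}_{\alpha_1}(\Delta)(1)\equiv0\pmod{\hbar^{k-1}}$ for $k\ge2$, $\mathrm{ad}_\alpha(D)=[D,\alpha]$ the graded commutator. A $BV_\infty$ morphism $f=\sum_kf_k\hbar^k:A[[\hbar]]\to B[[\hbar]]$ is a degree zero $\mathbb{C}[[\hbar]]$-linear map with $f(1_A)=1_B$, $f\circ\Delta=\Delta'\circ f$, and cumulant condition $\kappa_n(f)(\alpha_1,\dots,\alpha_n)\equiv0\pmod{\hbar^{n-1}}$ for all $n\ge2$, where $\kappa_n(f)(\alpha_1,\dots,\alpha_n)=\frac{\partial^n}{\partial J_1\cdots\partial J_n}\big|_{J=0}\log f(e^{\sum_iJ_i\alpha_i})$ (formal parameters $|J_i|=-|\alpha_i|$), equivalently the alternating sum over set partitions $\sum_{k}\sum_{\{I_1,\dots,I_k\}}(-1)^{k-1}(k-1)!\pm_K\prod_jf(\prod_{i\in I_j}\alpha_i)$. It is a quasi-isomorphism if $f_0:H(A,\Delta_0)\to H(B,\Delta'_0)$ is an isomorphism. *)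

theory Defs
  imports "HOL-Computational_Algebra.Polynomial" "HOL-Computational_Algebra.Formal_Power_Series"
          "HOL-Library.Disjoint_Sets" "HOL-Library.Product_Plus" "HOL-Library.Function_Algebras"
begin

section \<open>Generic notions (hbar of degree 1 - m = 0 since m = 1)\<close>

text \<open>Iterated graded commutators applied to an operator D of degree e:
  ad_seq mul D e al d k = ad_{al_{k-1}} ... ad_{al_0} (D), where al_i is homogeneous of
  degree d_i and ad_a(D') = D' o m_a - (-1)^(|D'| |a|) m_a o D'.\<close>
primrec ad_seq :: "('x::ab_group_add \<Rightarrow> 'x \<Rightarrow> 'x) \<Rightarrow> ('x \<Rightarrow> 'x) \<Rightarrow> int \<Rightarrow> (nat \<Rightarrow> 'x)
     \<Rightarrow> (nat \<Rightarrow> int) \<Rightarrow> nat \<Rightarrow> ('x \<Rightarrow> 'x)" where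
  "ad_seq mul D e al d 0 = D"
| "ad_seq mul D e al d (Suc j) =
     (\<lambda>x. if even ((e + (\<Sum>i<j. d i)) * d j)
          then ad_seq mul D e al d j (mul (al j) x) - mul (al j) (ad_seq mul D e al d j x)
          else ad_seq mul D e al d j (mul (al j) x) + mul (al j) (ad_seq mul D e al d j x))"

text \<open>BV_infinity operator conditions on an hbar-series algebra with multiplication mul, unit one,
  homogeneity predicate hom (hom d x: x homogeneous of degree d), hdvd k x: x = 0 mod hbar^k,
  and C[[hbar]]-action sc.\<close>
definition bv_inf_alg :: "('x::ab_group_add \<Rightarrow> 'x \<Rightarrow> 'x) \<Rightarrow> 'x \<Rightarrow> (int \<Rightarrow> 'x \<Rightarrow> bool)
     \<Rightarrow> (nat \<Rightarrow> 'x \<Rightarrow> bool) \<Rightarrow> (complex fps \<Rightarrow> 'x \<Rightarrow> 'x) \<Rightarrow> ('x \<Rightarrow> 'x) \<Rightarrow> bool" where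
  "bv_inf_alg mul one hom hdvd sc D \<longleftrightarrow>
     (\<forall>p x. D (sc p x) = sc p (D x)) \<and> (\<forall>x y. D (x + y) = D x + D y) \<and>
     (\<forall>d x. hom d x \<longrightarrow> hom (d + 1) (D x)) \<and>
     D one = 0 \<and> (\<forall>x. D (D x) = 0) \<and>
     (\<forall>k\<ge>2. \<forall>al d. (\<forall>i<k. hom (d i) (al i)) \<longrightarrow> hdvd (k - 1) (ad_seq mul D 1 al d k one))"

definition block_prod :: "('x \<Rightarrow> 'x \<Rightarrow> 'x) \<Rightarrow> 'x \<Rightarrow> nat set \<Rightarrow> (nat \<Rightarrow> 'x) \<Rightarrow> 'x" where
  "block_prod mul one I al = foldr (\<lambda>i. mul (al i)) (sorted_list_of_set I) one"

definition blk :: "nat set set \<Rightarrow> nat \<Rightarrow> nat set" where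
  "blk P i = (THE I. I \<in> P \<and> i \<in> I)"

text \<open>Koszul sign of reordering al_0 ... al_{n-1} into the blocks of P (blocks ordered by their
  minima, increasing order inside each block); d i is the degree of al_i.\<close>
definition koszul_sign :: "nat \<Rightarrow> nat set set \<Rightarrow> (nat \<Rightarrow> int) \<Rightarrow> int" where
  "koszul_sign n P d = (-1) ^ card {(i, j). i < j \<and> j < n \<and> odd (d i) \<and> odd (d j)
                                         \<and> Min (blk P j) < Min (blk P i)}"

definition cumulant :: "('x \<Rightarrow> 'x \<Rightarrow> 'x) \<Rightarrow> 'x \<Rightarrow> ('x \<Rightarrow> 'y::comm_ring_1) \<Rightarrow> nat
     \<Rightarrow> (nat \<Rightarrow> 'x) \<Rightarrow> (nat \<Rightarrow> int) \<Rightarrow> 'y" where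
  "cumulant mul one f n al d =
     (\<Sum>P\<in>{P. partition_on {..<n} P}.
        of_int ((-1) ^ (card P - 1) * fact (card P - 1) * koszul_sign n P d)
        * (\<Prod>I\<in>P. f (block_prod mul one I al)))"

definition bv_inf_mor :: "('x::ab_group_add \<Rightarrow> 'x \<Rightarrow> 'x) \<Rightarrow> 'x \<Rightarrow> (int \<Rightarrow> 'x \<Rightarrow> bool)
     \<Rightarrow> (complex fps \<Rightarrow> 'x \<Rightarrow> 'x) \<Rightarrow> ('x \<Rightarrow> 'x)
     \<Rightarrow> (int \<Rightarrow> 'y::comm_ring_1 \<Rightarrow> bool) \<Rightarrow> (nat \<Rightarrow> 'y \<Rightarrow> bool) \<Rightarrow> (complex fps \<Rightarrow> 'y \<Rightarrow> 'y)
     \<Rightarrow> ('y \<Rightarrow> 'y) \<Rightarrow> ('x \<Rightarrow> 'y) \<Rightarrow> bool" where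
  "bv_inf_mor mulA oneA homA scA DA homB hdvdB scB DB f \<longleftrightarrow>
     (\<forall>p x. f (scA p x) = scB p (f x)) \<and> (\<forall>x y. f (x + y) = f x + f y) \<and>
     (\<forall>d x. homA d x \<longrightarrow> homB d (f x)) \<and>
     f oneA = 1 \<and> (\<forall>x. f (DA x) = DB (f x)) \<and>
     (\<forall>n\<ge>2. \<forall>al d. (\<forall>i<n. homA (d i) (al i)) \<longrightarrow> hdvdB (n - 1) (cumulant mulA oneA f n al d))"

text \<open>f_0 induces an isomorphism H(A, D0A) \<rightarrow> H(B, D0B) (chain map + bijectivity on cohomology).\<close>
definition quasi_iso0 :: "('a::ab_group_add \<Rightarrow> 'a) \<Rightarrow> ('b::ab_group_add \<Rightarrow> 'b) \<Rightarrow> ('a \<Rightarrow> 'b) \<Rightarrow> bool" where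
  "quasi_iso0 D0A D0B f0 \<longleftrightarrow>
     (\<forall>x y. f0 (x + y) = f0 x + f0 y) \<and>
     (\<forall>a. f0 (D0A a) = D0B (f0 a)) \<and>
     (\<forall>a. D0A a = 0 \<and> f0 a \<in> range D0B \<longrightarrow> a \<in> range D0A) \<and>
     (\<forall>b. D0B b = 0 \<longrightarrow> (\<exists>a. D0A a = 0 \<and> b - f0 a \<in> range D0B))"

section \<open>The algebra A = C[t] + C[t] dt and A[[hbar]]\<close>

text \<open>(g, h) represents g(t) + h(t) dt; g has degree 0, h dt degree -1.\<close>
type_synonym A0 = "complex poly \<times> complex poly"
text \<open>X represents the series sum_n hbar^n X n.\<close>
type_synonym Ah = "nat \<Rightarrow> A0"

text \<open>Graded commutative product (dt odd, so dt * dt = 0).\<close>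
definition mulA0 :: "A0 \<Rightarrow> A0 \<Rightarrow> A0" where
  "mulA0 x y = (fst x * fst y, fst x * snd y + snd x * fst y)"

definition mulAh :: "Ah \<Rightarrow> Ah \<Rightarrow> Ah" where
  "mulAh X Y = (\<lambda>n. \<Sum>i\<le>n. mulA0 (X i) (Y (n - i)))"

definition oneAh :: Ah where
  "oneAh = (\<lambda>n. if n = 0 then (1, 0) else 0)"

definition scAh :: "complex fps \<Rightarrow> Ah \<Rightarrow> Ah" where
  "scAh p X = (\<lambda>n. \<Sum>i\<le>n. (smult (fps_nth p i) (fst (X (n - i))), smult (fps_nth p i) (snd (X (n - i)))))"

definition homA :: "int \<Rightarrow> Ah \<Rightarrow> bool" where
  "homA d X \<longleftrightarrow> (\<forall>n. (d \<noteq> 0 \<longrightarrow> fst (X n) = 0) \<and> (d \<noteq> -1 \<longrightarrow> snd (X n) = 0))"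

definition hdvdA :: "nat \<Rightarrow> Ah \<Rightarrow> bool" where
  "hdvdA k X \<longleftrightarrow> (\<forall>n<k. X n = 0)"

definition hseries_op :: "(nat \<Rightarrow> A0 \<Rightarrow> A0) \<Rightarrow> Ah \<Rightarrow> Ah" where
  "hseries_op D X = (\<lambda>n. \<Sum>k\<le>n. D k (X (n - k)))"

definition Delta0 :: "A0 \<Rightarrow> A0" where
  "Delta0 x = ([:0, 1:] * snd x, 0)"

definition Delta1 :: "A0 \<Rightarrow> A0" where
  "Delta1 x = (pderiv (snd x), 0)"

definition DeltaA_k :: "nat \<Rightarrow> A0 \<Rightarrow> A0" where
  "DeltaA_k k = (if k = 0 then Delta0 else if k = 1 then Delta1 else (\<lambda>_. 0))"

definition DeltaA :: "Ah \<Rightarrow> Ah" where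
  "DeltaA = hseries_op DeltaA_k"

text \<open>(2i-1)!! = 1 * 3 * ... * (2i-1), with (-1)!! = 1.\<close>
definition dfact_odd :: "nat \<Rightarrow> nat" where
  "dfact_odd i = (\<Prod>k<i. 2 * k + 1)"

definition f_i :: "nat \<Rightarrow> A0 \<Rightarrow> complex" where
  "f_i i x = (-1) ^ i * of_nat (dfact_odd i) * coeff (fst x) (2 * i)"

definition hseries_map :: "(nat \<Rightarrow> A0 \<Rightarrow> complex) \<Rightarrow> Ah \<Rightarrow> complex fps" where
  "hseries_map F X = Abs_fps (\<lambda>n. \<Sum>i\<le>n. F i (X (n - i)))"

definition fA :: "Ah \<Rightarrow> complex fps" where
  "fA = hseries_map f_i"

section \<open>B = C, B[[hbar]] = C[[hbar]]\<close>

definition homB :: "int \<Rightarrow> complex fps \<Rightarrow> bool" where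
  "homB d p \<longleftrightarrow> d = 0 \<or> p = 0"

definition hdvdB :: "nat \<Rightarrow> complex fps \<Rightarrow> bool" where
  "hdvdB k p \<longleftrightarrow> (\<forall>n<k. fps_nth p n = 0)"

definition DeltaB :: "complex fps \<Rightarrow> complex fps" where
  "DeltaB p = 0"

definition fps_neg :: "complex fps \<Rightarrow> complex fps" where
  "fps_neg p = Abs_fps (\<lambda>n. (-1) ^ n * fps_nth p n)"

definition pairB :: "complex fps \<Rightarrow> complex fps \<Rightarrow> complex fps" where
  "pairB p q = p * fps_neg q"

definition mono_pair :: "nat \<Rightarrow> nat \<Rightarrow> complex fps" where
  "mono_pair a b = (if even a \<and> even b
     then fps_const ((-1) ^ (a div 2) * of_nat (dfact_odd (a div 2) * dfact_odd (b div 2)))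
          * fps_X ^ (a div 2 + b div 2)
     else 0)"

definition tcoeff :: "Ah \<Rightarrow> nat \<Rightarrow> complex fps" where
  "tcoeff X a = Abs_fps (\<lambda>n. coeff (fst (X n)) a)"

text \<open>The hbar^N coefficient only receives contributions from a, b \<le> 2N (mono_pair a b has
  hbar-order \<ge> a div 2 + b div 2 and vanishes for odd a, b), so the sum is truncated exactly.\<close>
definition pairA :: "Ah \<Rightarrow> Ah \<Rightarrow> complex fps" where
  "pairA X Y = Abs_fps (\<lambda>N. \<Sum>a\<le>2 * N. \<Sum>b\<le>2 * N.
      fps_nth (tcoeff X a * mono_pair a b * fps_neg (tcoeff Y b)) N)"

end

theory Submission
  imports Defs
begin

text \<open>
  Write an element of \<open>A[[\<hbar>]]\<close> as \<open>g + h \<partial>\<^sub>t\<close> with \<open>g, h \<in> \<complex>[t][[\<hbar>]]\<close>.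
  The map \<open>f\<close> only sees \<open>g\<close> and is a Gaussian integral: \<open>t\<^sup>2\<^sup>i \<mapsto> (2i-1)!! (-\<hbar>)\<^sup>i\<close> are the moments
  of a centred Gaussian of variance \<open>-\<hbar>\<close>. Its integration by parts formula
  \<open>f(t Z) = -\<hbar> f(\<partial>\<^sub>t Z)\<close> is exactly \<open>f \<circ> \<Delta> = 0\<close>, as \<open>\<Delta>(h \<partial>\<^sub>t) = t h + \<hbar> \<partial>\<^sub>t h\<close>.
  The operator \<open>\<Delta>\<close> has order two and its bracket is divisible by \<open>\<hbar>\<close>, which gives the
  \<open>BV\<^sub>\<infinity>\<close> conditions on \<open>A\<close>.

  For the cumulant conditions, expand a cumulant of polynomials \<open>x\<^sub>1, \<dots>, x\<^sub>n\<close> along the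
  block containing \<open>x\<^sub>w = c + t Y\<close>. The constant \<open>c\<close> contributes nothing, and integration by
  parts turns the \<open>t Y\<close> part into \<open>-\<hbar>\<close> times cumulants of \<open>n\<close> or \<open>n - 1\<close> polynomials,
  so by induction the \<open>n\<close>-th cumulant is divisible by \<open>\<hbar>\<^sup>n\<^sup>-\<^sup>1\<close>. The pairing identity reduces to
  \<open>f(t\<^sup>a) f(t\<^sup>b)(-\<hbar>) = (t\<^sup>a, t\<^sup>b)\<close>.
\<close>

section \<open>The Gaussian integral on \<open>\<complex>[t][[\<hbar>]]\<close>\<close>

type_synonym cpoly_fps = "complex poly fps"

definition gauss_moment :: "nat \<Rightarrow> complex" where
  "gauss_moment i = (-1) ^ i * of_nat (dfact_odd i)"

definition gauss_integral :: "cpoly_fps \<Rightarrow> complex fps" where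
  "gauss_integral Z = Abs_fps (\<lambda>n. \<Sum>i\<le>n. gauss_moment i * coeff (fps_nth Z (n - i)) (2 * i))"

definition const_poly_fps :: "complex fps \<Rightarrow> cpoly_fps" where
  "const_poly_fps c = Abs_fps (\<lambda>n. [:fps_nth c n:])"

definition t_fps :: cpoly_fps where
  "t_fps = fps_const [:0, 1:]"

definition tderiv :: "cpoly_fps \<Rightarrow> cpoly_fps" where
  "tderiv Z = Abs_fps (\<lambda>n. pderiv (fps_nth Z n))"

definition tcoeff_fps :: "nat \<Rightarrow> cpoly_fps \<Rightarrow> complex fps" where
  "tcoeff_fps a Z = Abs_fps (\<lambda>n. coeff (fps_nth Z n) a)"

lemma gauss_moment_Suc: "gauss_moment (Suc i) = - of_nat (2 * i + 1) * gauss_moment i"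
  by (simp add: gauss_moment_def dfact_odd_def algebra_simps)

lemma tcoeff_fps_nth [simp]: "fps_nth (tcoeff_fps a Z) n = coeff (fps_nth Z n) a"
  by (simp add: tcoeff_fps_def)

lemma gauss_integral_add: "gauss_integral (Z + W) = gauss_integral Z + gauss_integral W"
  by (rule fps_ext) (simp add: gauss_integral_def distrib_left sum.distrib)

lemma gauss_integral_0 [simp]: "gauss_integral 0 = 0"
  by (rule fps_ext) (simp add: gauss_integral_def)

lemma gauss_integral_sum: "gauss_integral (\<Sum>i\<in>S. Z i) = (\<Sum>i\<in>S. gauss_integral (Z i))"
  by (induction S rule: infinite_finite_induct) (simp_all add: gauss_integral_add)

lemma gauss_integral_1 [simp]: "gauss_integral 1 = 1"
proof (rule fps_ext)
  fix n
  have "gauss_moment i * coeff (fps_nth 1 (n - i)) (2 * i) = (if n = 0 then 1 else 0)" if "i \<le> n" for i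
    using that by (cases "i = n") (auto simp: gauss_moment_def dfact_odd_def)
  then show "fps_nth (gauss_integral 1) n = fps_nth 1 n"
    by (simp add: gauss_integral_def)
qed

lemma gauss_integral_nth_eq_truncation:
  assumes "k \<le> N"
  shows "fps_nth (gauss_integral Z) k
           = fps_nth (\<Sum>i\<le>N. fps_const (gauss_moment i) * fps_X ^ i * tcoeff_fps (2 * i) Z) k"
proof -
  have "fps_nth (\<Sum>i\<le>N. fps_const (gauss_moment i) * fps_X ^ i * tcoeff_fps (2 * i) Z) k
      = (\<Sum>i\<le>N. gauss_moment i * (if k < i then 0 else coeff (fps_nth Z (k - i)) (2 * i)))"
    by (simp add: fps_sum_nth mult.assoc fps_X_power_mult_nth cong: if_cong)
  also have "\<dots> = (\<Sum>i\<le>k. gauss_moment i * coeff (fps_nth Z (k - i)) (2 * i))"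
    by (rule sum.mono_neutral_cong_right) (use assms in auto)
  finally show ?thesis
    by (simp add: gauss_integral_def)
qed

lemma fps_mult_nth_cong:
  assumes "\<And>k. k \<le> n \<Longrightarrow> fps_nth f k = fps_nth f' k" "\<And>k. k \<le> n \<Longrightarrow> fps_nth g k = fps_nth g' k"
  shows "fps_nth (f * g) n = fps_nth (f' * g') n"
  using assms by (simp add: fps_mult_nth)

lemma tcoeff_fps_const_poly_mult: "tcoeff_fps a (const_poly_fps c * Z) = c * tcoeff_fps a Z"
  by (rule fps_ext) (simp add: const_poly_fps_def fps_mult_nth coeff_sum)

lemma gauss_integral_const_poly_mult:
  "gauss_integral (const_poly_fps c * Z) = c * gauss_integral Z"
proof (rule fps_ext)
  fix n
  define trunc where "trunc W = (\<Sum>i\<le>n. fps_const (gauss_moment i) * fps_X ^ i * tcoeff_fps (2 * i) W)"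
    for W
  have "trunc (const_poly_fps c * Z)
      = (\<Sum>i\<le>n. c * (fps_const (gauss_moment i) * fps_X ^ i * tcoeff_fps (2 * i) Z))"
    unfolding trunc_def tcoeff_fps_const_poly_mult by (simp add: mult_ac)
  then have "trunc (const_poly_fps c * Z) = c * trunc Z"
    by (simp add: trunc_def sum_distrib_left)
  then have "fps_nth (gauss_integral (const_poly_fps c * Z)) n = fps_nth (c * trunc Z) n"
    using gauss_integral_nth_eq_truncation[of n n] by (simp add: trunc_def)
  also have "\<dots> = fps_nth (c * gauss_integral Z) n"
    by (rule fps_mult_nth_cong) (simp_all add: trunc_def gauss_integral_nth_eq_truncation)
  finally show "fps_nth (gauss_integral (const_poly_fps c * Z)) n = fps_nth (c * gauss_integral Z) n" .
qed

lemma const_poly_fps_1 [simp]: "const_poly_fps 1 = 1"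
  by (rule fps_ext) (simp add: const_poly_fps_def)

lemma const_poly_fps_X [simp]: "const_poly_fps fps_X = fps_X"
  by (rule fps_ext) (simp add: const_poly_fps_def)

lemma gauss_integral_X_mult: "gauss_integral (fps_X * Z) = fps_X * gauss_integral Z"
  using gauss_integral_const_poly_mult[of fps_X Z] by simp

text \<open>Gaussian integration by parts; on monomials it is the recursion
  \<open>gauss_moment (i + 1) = - (2 i + 1) * gauss_moment i\<close> of the moments.\<close>
lemma gauss_integral_t_mult: "gauss_integral (t_fps * Z) = - fps_X * gauss_integral (tderiv Z)"
proof (rule fps_ext)
  fix n
  show "fps_nth (gauss_integral (t_fps * Z)) n = fps_nth (- fps_X * gauss_integral (tderiv Z)) n"
  proof (cases n)
    case 0
    then show ?thesis by (simp add: gauss_integral_def t_fps_def)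
  next
    case (Suc m)
    have "fps_nth (gauss_integral (t_fps * Z)) n
        = (\<Sum>i\<le>Suc m. gauss_moment i * coeff (pCons 0 (fps_nth Z (Suc m - i))) (2 * i))"
      using Suc by (simp add: gauss_integral_def t_fps_def)
    also have "\<dots> = (\<Sum>i\<le>m. gauss_moment (Suc i) * coeff (fps_nth Z (m - i)) (2 * i + 1))"
      by (subst sum.atMost_Suc_shift) simp
    also have "\<dots> = - (\<Sum>i\<le>m. gauss_moment i * coeff (pderiv (fps_nth Z (m - i))) (2 * i))"
      by (simp add: gauss_moment_Suc coeff_pderiv sum_negf[symmetric] algebra_simps)
    also have "\<dots> = fps_nth (- fps_X * gauss_integral (tderiv Z)) n"
      using Suc by (simp add: gauss_integral_def tderiv_def)
    finally show ?thesis .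
  qed
qed

lemma tderiv_add: "tderiv (Z + W) = tderiv Z + tderiv W"
  by (rule fps_ext) (simp add: tderiv_def pderiv_add)

lemma pderiv_sum: "pderiv (\<Sum>i\<in>S. p i) = (\<Sum>i\<in>S. pderiv (p i))"
  using higher_pderiv_sum[of 1] by simp

lemma tderiv_mult: "tderiv (Z * W) = tderiv Z * W + Z * tderiv W"
proof (rule fps_ext)
  fix n
  have "fps_nth (tderiv (Z * W)) n = (\<Sum>i = 0..n. pderiv (fps_nth Z i * fps_nth W (n - i)))"
    by (simp add: tderiv_def fps_mult_nth pderiv_sum)
  also have "\<dots> = (\<Sum>i = 0..n. pderiv (fps_nth Z i) * fps_nth W (n - i)
                              + fps_nth Z i * pderiv (fps_nth W (n - i)))"
    by (simp add: pderiv_mult ac_simps)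
  also have "\<dots> = fps_nth (tderiv Z * W + Z * tderiv W) n"
    by (simp add: tderiv_def fps_mult_nth sum.distrib)
  finally show "fps_nth (tderiv (Z * W)) n = fps_nth (tderiv Z * W + Z * tderiv W) n" .
qed

lemma tderiv_const_poly_fps [simp]: "tderiv (const_poly_fps c) = 0"
  by (rule fps_ext) (simp add: tderiv_def const_poly_fps_def pderiv_pCons)

lemma tderiv_0 [simp]: "tderiv 0 = 0"
  by (rule fps_ext) (simp add: tderiv_def)

lemma tderiv_1 [simp]: "tderiv 1 = 0"
  using tderiv_const_poly_fps[of 1] by simp

lemma tderiv_prod:
  "finite B \<Longrightarrow> tderiv (\<Prod>i\<in>B. Z i) = (\<Sum>j\<in>B. tderiv (Z j) * (\<Prod>i\<in>B - {j}. Z i))"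
proof (induction B rule: finite_induct)
  case (insert a B)
  have "(\<Prod>i\<in>insert a B - {j}. Z i) = Z a * (\<Prod>i\<in>B - {j}. Z i)" if "j \<in> B" for j
  proof -
    have "insert a B - {j} = insert a (B - {j})"
      using that insert.hyps by auto
    then show ?thesis
      using insert.hyps by simp
  qed
  moreover have "insert a B - {a} = B"
    using insert.hyps by auto
  ultimately show ?case
    using insert by (simp add: tderiv_mult sum_distrib_left algebra_simps)
qed simp

lemma gauss_integral_t_mult_prod:
  assumes "finite B"
  shows "gauss_integral (t_fps * Y * (\<Prod>i\<in>B. x i))
       = - fps_X * (gauss_integral (tderiv Y * (\<Prod>i\<in>B. x i))
                    + (\<Sum>j\<in>B. gauss_integral (Y * tderiv (x j) * (\<Prod>i\<in>B - {j}. x i))))"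
proof -
  have "tderiv (Y * (\<Prod>i\<in>B. x i))
      = tderiv Y * (\<Prod>i\<in>B. x i) + (\<Sum>j\<in>B. Y * tderiv (x j) * (\<Prod>i\<in>B - {j}. x i))"
    by (simp add: tderiv_mult tderiv_prod[OF assms] sum_distrib_left mult.assoc)
  then show ?thesis
    by (simp add: mult.assoc gauss_integral_t_mult gauss_integral_add gauss_integral_sum)
qed

section \<open>The operator \<open>\<Delta>\<close> on \<open>A[[\<hbar>]]\<close>\<close>

lemma ad_seq_hom:
  fixes \<phi> :: "'x::ab_group_add \<Rightarrow> 'y::ab_group_add"
  assumes mult: "\<And>a b. \<phi> (mul a b) = mul' (\<phi> a) (\<phi> b)"
    and op: "\<And>x. \<phi> (D x) = D' (\<phi> x)"
    and add: "\<And>x y. \<phi> (x + y) = \<phi> x + \<phi> y"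
  shows "\<phi> (ad_seq mul D e al d j x) = ad_seq mul' D' e (\<lambda>i. \<phi> (al i)) d j (\<phi> x)"
proof (induction j arbitrary: x)
  case (Suc j)
  have diff: "\<phi> (x - y) = \<phi> x - \<phi> y" for x y
    using add[of "x - y" y] by (simp add: eq_diff_eq)
  show ?case
    by (simp only: ad_seq.simps if_distrib[where f = \<phi>] diff add mult Suc.IH)
qed (simp add: op)

definition fun_part :: "Ah \<Rightarrow> cpoly_fps" where
  "fun_part X = Abs_fps (\<lambda>n. fst (X n))"

definition dt_part :: "Ah \<Rightarrow> cpoly_fps" where
  "dt_part X = Abs_fps (\<lambda>n. snd (X n))"

lemma fun_part_nth [simp]: "fps_nth (fun_part X) n = fst (X n)"
  by (simp add: fun_part_def)

lemma dt_part_nth [simp]: "fps_nth (dt_part X) n = snd (X n)"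
  by (simp add: dt_part_def)

lemma Ah_eqI: "fun_part X = fun_part Y \<Longrightarrow> dt_part X = dt_part Y \<Longrightarrow> X = Y"
  by (metis fun_part_nth dt_part_nth prod_eq_iff ext)

lemma fun_part_eq_0_iff: "fun_part X = 0 \<longleftrightarrow> (\<forall>n. fst (X n) = 0)"
  by (metis fps_ext fps_zero_nth fun_part_nth)

lemma dt_part_eq_0_iff: "dt_part X = 0 \<longleftrightarrow> (\<forall>n. snd (X n) = 0)"
  by (metis fps_ext fps_zero_nth dt_part_nth)

lemma fun_part_add: "fun_part (X + Y) = fun_part X + fun_part Y"
  by (rule fps_ext) simp

lemma dt_part_add: "dt_part (X + Y) = dt_part X + dt_part Y"
  by (rule fps_ext) simp

lemma fun_part_0 [simp]: "fun_part 0 = 0"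
  by (rule fps_ext) simp

lemma dt_part_0 [simp]: "dt_part 0 = 0"
  by (rule fps_ext) simp

lemma fun_part_mulAh: "fun_part (mulAh X Y) = fun_part X * fun_part Y"
  by (rule fps_ext) (simp add: mulAh_def fst_sum mulA0_def fps_mult_nth atLeast0AtMost)

lemma dt_part_mulAh: "dt_part (mulAh X Y) = fun_part X * dt_part Y + dt_part X * fun_part Y"
  by (rule fps_ext) (simp add: mulAh_def snd_sum mulA0_def fps_mult_nth atLeast0AtMost sum.distrib)

lemma fun_part_oneAh [simp]: "fun_part oneAh = 1"
  by (rule fps_ext) (simp add: oneAh_def)

lemma dt_part_oneAh [simp]: "dt_part oneAh = 0"
  by (rule fps_ext) (simp add: oneAh_def)

lemma fun_part_scAh: "fun_part (scAh p X) = const_poly_fps p * fun_part X"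
  by (rule fps_ext) (simp add: scAh_def fst_sum const_poly_fps_def fps_mult_nth atLeast0AtMost)

lemma dt_part_scAh: "dt_part (scAh p X) = const_poly_fps p * dt_part X"
  by (rule fps_ext) (simp add: scAh_def snd_sum const_poly_fps_def fps_mult_nth atLeast0AtMost)

lemma DeltaA_nth: "DeltaA X n = Delta0 (X n) + (if n = 0 then 0 else Delta1 (X (n - 1)))"
proof (cases n)
  case (Suc m)
  have "(\<Sum>k\<le>m. DeltaA_k (Suc k) (X (m - k))) = (\<Sum>k\<le>m. if k = 0 then Delta1 (X m) else 0)"
    by (rule sum.cong) (auto simp: DeltaA_k_def)
  then show ?thesis
    unfolding DeltaA_def hseries_op_def Suc by (subst sum.atMost_Suc_shift) (simp add: DeltaA_k_def)
qed (simp add: DeltaA_def hseries_op_def DeltaA_k_def)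

lemma fun_part_DeltaA: "fun_part (DeltaA X) = t_fps * dt_part X + fps_X * tderiv (dt_part X)"
  by (rule fps_ext) (simp add: DeltaA_nth Delta0_def Delta1_def t_fps_def tderiv_def)

lemma dt_part_DeltaA [simp]: "dt_part (DeltaA X) = 0"
  by (rule fps_ext) (simp add: DeltaA_nth Delta0_def Delta1_def)

lemma fA_eq_gauss_integral: "fA X = gauss_integral (fun_part X)"
  unfolding fA_def hseries_map_def gauss_integral_def f_i_def gauss_moment_def by simp

definition Ah_to_pair :: "Ah \<Rightarrow> cpoly_fps \<times> cpoly_fps" where
  "Ah_to_pair X = (fun_part X, dt_part X)"

definition pair_mult :: "cpoly_fps \<times> cpoly_fps \<Rightarrow> cpoly_fps \<times> cpoly_fps \<Rightarrow> cpoly_fps \<times> cpoly_fps" where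
  "pair_mult a b = (fst a * fst b, fst a * snd b + snd a * fst b)"

definition pair_Delta :: "cpoly_fps \<times> cpoly_fps \<Rightarrow> cpoly_fps \<times> cpoly_fps" where
  "pair_Delta a = (t_fps * snd a + fps_X * tderiv (snd a), 0)"

definition pair_hom :: "int \<Rightarrow> cpoly_fps \<times> cpoly_fps \<Rightarrow> bool" where
  "pair_hom d a \<longleftrightarrow> (d \<noteq> 0 \<longrightarrow> fst a = 0) \<and> (d \<noteq> -1 \<longrightarrow> snd a = 0)"

text \<open>\<open>\<hbar>\<close> times the BV bracket: by \<open>ad_seq_pair_two\<close>, \<open>ad\<^sub>a\<^sub>1 ad\<^sub>a\<^sub>0 \<Delta>\<close> is multiplication by
  \<open>pair_bracket a\<^sub>0 a\<^sub>1\<close>.\<close>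
definition pair_bracket :: "cpoly_fps \<times> cpoly_fps \<Rightarrow> cpoly_fps \<times> cpoly_fps \<Rightarrow> cpoly_fps \<times> cpoly_fps" where
  "pair_bracket a b = (fps_X * (tderiv (fst a) * snd b + tderiv (fst b) * snd a),
                       fps_X * (snd a * tderiv (snd b) - snd b * tderiv (snd a)))"

lemma Ah_to_pair_mulAh: "Ah_to_pair (mulAh X Y) = pair_mult (Ah_to_pair X) (Ah_to_pair Y)"
  by (simp add: Ah_to_pair_def pair_mult_def fun_part_mulAh dt_part_mulAh)

lemma Ah_to_pair_DeltaA: "Ah_to_pair (DeltaA X) = pair_Delta (Ah_to_pair X)"
  by (simp add: Ah_to_pair_def pair_Delta_def fun_part_DeltaA)

lemma Ah_to_pair_add: "Ah_to_pair (X + Y) = Ah_to_pair X + Ah_to_pair Y"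
  by (simp add: Ah_to_pair_def fun_part_add dt_part_add)

lemma homA_iff_pair_hom: "homA d X \<longleftrightarrow> pair_hom d (Ah_to_pair X)"
  by (auto simp: homA_def pair_hom_def Ah_to_pair_def fun_part_eq_0_iff dt_part_eq_0_iff)

lemma pair_hom_cases:
  assumes "pair_hom d a"
  obtains p where "d = 0" "a = (p, 0)" | q where "d = -1" "a = (0, q)" | "a = 0"
  using assms unfolding pair_hom_def by (cases a) (auto simp: zero_prod_def)

lemma ad_seq_pair_two:
  assumes "pair_hom (d 0) (a 0)" "pair_hom (d 1) (a 1)"
  shows "ad_seq pair_mult pair_Delta 1 a d 2 x = pair_mult (pair_bracket (a 0) (a 1)) x"
  using assms(1)
proof (cases rule: pair_hom_cases)
  case 1
  from assms(2) show ?thesis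
    by (cases rule: pair_hom_cases) (use 1 in \<open>auto simp: numeral_2_eq_2 pair_mult_def pair_Delta_def
          pair_bracket_def tderiv_mult tderiv_add algebra_simps prod_eq_iff zero_prod_def\<close>)
next
  case 2
  from assms(2) show ?thesis
    by (cases rule: pair_hom_cases) (use 2 in \<open>auto simp: numeral_2_eq_2 pair_mult_def pair_Delta_def
          pair_bracket_def tderiv_mult tderiv_add algebra_simps prod_eq_iff zero_prod_def\<close>)
next
  case 3
  then show ?thesis
    by (simp add: numeral_2_eq_2 pair_mult_def pair_Delta_def pair_bracket_def zero_prod_def)
qed

lemma pair_mult_graded_commute:
  assumes "pair_hom e c" "pair_hom d b"
  shows "(if even (e * d) then pair_mult c (pair_mult b x) - pair_mult b (pair_mult c x)
          else pair_mult c (pair_mult b x) + pair_mult b (pair_mult c x)) = 0"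
  using assms(1)
proof (cases rule: pair_hom_cases)
  case 1
  from assms(2) show ?thesis
    by (cases rule: pair_hom_cases) (use 1 in \<open>auto simp: pair_mult_def algebra_simps prod_eq_iff\<close>)
next
  case 2
  from assms(2) show ?thesis
    by (cases rule: pair_hom_cases) (use 2 in \<open>auto simp: pair_mult_def algebra_simps prod_eq_iff\<close>)
qed (simp add: pair_mult_def zero_prod_def)

lemma pair_hom_pair_bracket:
  assumes "pair_hom d a" "pair_hom d' b"
  shows "pair_hom (1 + d + d') (pair_bracket a b)"
  using assms(1)
proof (cases rule: pair_hom_cases)
  case 1
  from assms(2) show ?thesis
    by (cases rule: pair_hom_cases) (use 1 in \<open>auto simp: pair_hom_def pair_bracket_def\<close>)
next
  case 2
  from assms(2) show ?thesis
    by (cases rule: pair_hom_cases) (use 2 in \<open>auto simp: pair_hom_def pair_bracket_def\<close>)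
qed (simp add: pair_hom_def pair_bracket_def)

lemma ad_seq_pair_three:
  assumes "\<And>i. i < 3 \<Longrightarrow> pair_hom (d i) (a i)"
  shows "ad_seq pair_mult pair_Delta 1 a d 3 x = 0"
proof -
  define c where "c = pair_bracket (a 0) (a 1)"
  have two: "ad_seq pair_mult pair_Delta 1 a d 2 = pair_mult c"
    using ad_seq_pair_two[of d a] assms unfolding c_def by fastforce
  have "ad_seq pair_mult pair_Delta 1 a d (Suc 2) x
      = (if even ((1 + sum d {..<2}) * d 2)
         then ad_seq pair_mult pair_Delta 1 a d 2 (pair_mult (a 2) x)
              - pair_mult (a 2) (ad_seq pair_mult pair_Delta 1 a d 2 x)
         else ad_seq pair_mult pair_Delta 1 a d 2 (pair_mult (a 2) x)
              + pair_mult (a 2) (ad_seq pair_mult pair_Delta 1 a d 2 x))"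
    by (simp only: ad_seq.simps(2))
  also have "\<dots> = (if even ((1 + d 0 + d 1) * d 2)
                   then pair_mult c (pair_mult (a 2) x) - pair_mult (a 2) (pair_mult c x)
                   else pair_mult c (pair_mult (a 2) x) + pair_mult (a 2) (pair_mult c x))"
    unfolding two by (simp add: numeral_2_eq_2 add.assoc)
  also have "\<dots> = 0"
    unfolding c_def using assms
    by (intro pair_mult_graded_commute pair_hom_pair_bracket) simp_all
  finally show ?thesis
    by (simp add: numeral_3_eq_3 numeral_2_eq_2)
qed

lemma ad_seq_pair_vanish:
  assumes "\<And>i. i < k \<Longrightarrow> pair_hom (d i) (a i)" "3 \<le> k"
  shows "ad_seq pair_mult pair_Delta 1 a d k x = 0"
  using assms
proof (induction k arbitrary: x)
  case (Suc k)
  show ?case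
  proof (cases "k = 2")
    case True
    then show ?thesis
      using ad_seq_pair_three[of d a x] Suc.prems by (simp add: numeral_3_eq_3 numeral_2_eq_2)
  next
    case False
    then have vanish: "ad_seq pair_mult pair_Delta 1 a d k y = 0" for y
      using Suc by simp
    show ?thesis
      by (simp only: ad_seq.simps(2) vanish) (simp add: pair_mult_def zero_prod_def)
  qed
qed simp

lemma Ah_to_pair_ad_seq:
  "Ah_to_pair (ad_seq mulAh DeltaA e al d j x)
     = ad_seq pair_mult pair_Delta e (\<lambda>i. Ah_to_pair (al i)) d j (Ah_to_pair x)"
  by (rule ad_seq_hom[where \<phi> = Ah_to_pair]) (simp_all add: Ah_to_pair_mulAh Ah_to_pair_DeltaA Ah_to_pair_add)

lemma hdvdA_ad_seq:
  assumes "2 \<le> k" "\<forall>i<k. homA (d i) (al i)"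
  shows "hdvdA (k - 1) (ad_seq mulAh DeltaA 1 al d k oneAh)"
proof -
  define Z where "Z = ad_seq mulAh DeltaA 1 al d k oneAh"
  have hom: "pair_hom (d i) (Ah_to_pair (al i))" if "i < k" for i
    using assms(2) that homA_iff_pair_hom by blast
  have Z_pair: "Ah_to_pair Z = ad_seq pair_mult pair_Delta 1 (\<lambda>i. Ah_to_pair (al i)) d k (1, 0)"
    unfolding Z_def Ah_to_pair_ad_seq by (simp add: Ah_to_pair_def)
  show ?thesis
  proof (cases "k = 2")
    case True
    then have "Ah_to_pair Z = pair_bracket (Ah_to_pair (al 0)) (Ah_to_pair (al 1))"
      using Z_pair ad_seq_pair_two[of d "\<lambda>i. Ah_to_pair (al i)"] hom by (simp add: pair_mult_def)
    then have "Z 0 = 0"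
      by (simp add: Ah_to_pair_def pair_bracket_def prod_eq_iff flip: fun_part_nth dt_part_nth)
    then show ?thesis
      using True by (simp add: hdvdA_def Z_def)
  next
    case False
    then have "Ah_to_pair Z = 0"
      using Z_pair ad_seq_pair_vanish[of k d] hom assms(1) by simp
    then have "Z = 0"
      by (intro Ah_eqI) (simp_all add: Ah_to_pair_def zero_prod_def)
    then show ?thesis
      by (simp add: hdvdA_def Z_def)
  qed
qed

lemma bv_inf_alg_A: "bv_inf_alg mulAh oneAh homA hdvdA scAh DeltaA"
  unfolding bv_inf_alg_def
proof (intro conjI allI impI)
  show "DeltaA (scAh p x) = scAh p (DeltaA x)" for p x
    by (rule Ah_eqI) (simp_all add: fun_part_DeltaA fun_part_scAh dt_part_scAh tderiv_mult algebra_simps)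
  show "DeltaA (x + y) = DeltaA x + DeltaA y" for x y
    by (rule Ah_eqI) (simp_all add: fun_part_DeltaA fun_part_add dt_part_add tderiv_add algebra_simps)
  show "homA (d + 1) (DeltaA x)" if "homA d x" for d x
    using that by (auto simp: homA_iff_pair_hom pair_hom_def Ah_to_pair_def fun_part_DeltaA)
  show "DeltaA oneAh = 0"
    by (rule Ah_eqI) (simp_all add: fun_part_DeltaA)
  show "DeltaA (DeltaA x) = 0" for x
    by (rule Ah_eqI) (simp_all add: fun_part_DeltaA)
  show "hdvdA (k - 1) (ad_seq mulAh DeltaA 1 al d k oneAh)" if "2 \<le> k" "\<forall>i<k. homA (d i) (al i)" for k al d
    using that by (rule hdvdA_ad_seq)
qed

section \<open>Set partitions\<close>

lemma partition_on_block_unique: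
  "partition_on V P \<Longrightarrow> A \<in> P \<Longrightarrow> B \<in> P \<Longrightarrow> x \<in> A \<Longrightarrow> x \<in> B \<Longrightarrow> A = B"
  using pairwiseD[OF partition_onD2, of V P A B] by (auto simp: disjnt_def)

lemma partition_on_disjnt_other_blocks:
  "partition_on V P \<Longrightarrow> B \<in> P \<Longrightarrow> disjnt B (\<Union>(P - {B}))"
  using partition_on_block_unique[of V P B] by (auto simp: disjnt_def)

lemma partition_on_remove_block:
  assumes "partition_on V P" "B \<in> P"
  shows "partition_on (V - B) (P - {B})"
proof -
  have "partition_on V (insert B (P - {B}))"
    using assms by (simp add: insert_absorb)
  then show ?thesis
    using partition_on_insert[OF partition_on_disjnt_other_blocks[OF assms]] by blast
qed

lemma partition_on_minus_point:
  assumes "finite V" "partition_on (V - {w}) Q"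
  shows "finite Q" "B \<in> Q \<Longrightarrow> finite B" "B \<in> Q \<Longrightarrow> w \<notin> B" "{w} \<notin> Q"
    "B \<in> Q \<Longrightarrow> insert w B \<notin> Q"
proof -
  show "finite Q"
    using finite_elements[OF _ assms(2)] assms(1) by simp
qed (use assms partition_onD1[OF assms(2)] in \<open>auto intro: finite_subset[of B V]\<close>)

lemma bij_betw_partition_on_singleton:
  assumes "w \<in> V"
  shows "bij_betw (insert {w}) {Q. partition_on (V - {w}) Q} {P. partition_on V P \<and> {w} \<in> P}"
proof (rule bij_betwI[where g = "\<lambda>P. P - {{w}}"])
  show "insert {w} \<in> {Q. partition_on (V - {w}) Q} \<rightarrow> {P. partition_on V P \<and> {w} \<in> P}"
  proof
    fix Q assume "Q \<in> {Q. partition_on (V - {w}) Q}"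
    then have Q: "partition_on (V - {w}) Q" by simp
    have "disjnt {w} (\<Union>Q)"
      using partition_onD1[OF Q] by (auto simp: disjnt_def)
    then show "insert {w} Q \<in> {P. partition_on V P \<and> {w} \<in> P}"
      using Q assms by (simp add: partition_on_insert)
  qed
  show "(\<lambda>P. P - {{w}}) \<in> {P. partition_on V P \<and> {w} \<in> P} \<rightarrow> {Q. partition_on (V - {w}) Q}"
    using partition_on_remove_block by fastforce
  show "insert {w} Q - {{w}} = Q" if "Q \<in> {Q. partition_on (V - {w}) Q}" for Q
    using that partition_onD1[of "V - {w}" Q] by auto
qed auto

lemma partition_on_insert_point:
  assumes Q: "partition_on (V - {w}) Q" and B: "B \<in> Q" and w: "w \<in> V"
  shows "partition_on V (insert (insert w B) (Q - {B}))"
proof -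
  have rest: "partition_on (V - {w} - B) (Q - {B})"
    using partition_on_remove_block[OF Q B] .
  have "disjnt (insert w B) (\<Union>(Q - {B}))"
    using partition_on_disjnt_other_blocks[OF Q B] partition_onD1[OF Q] by (auto simp: disjnt_def)
  moreover have "V - insert w B = V - {w} - B"
    by auto
  ultimately show ?thesis
    using rest B w partition_onD1[OF Q] by (auto simp: partition_on_insert)
qed

lemma partition_on_delete_point:
  assumes P: "partition_on V P" and B: "B \<in> P" "w \<in> B" and w: "{w} \<notin> P"
  shows "partition_on (V - {w}) (insert (B - {w}) (P - {B}))"
proof -
  have rest: "partition_on (V - B) (P - {B})"
    using partition_on_remove_block[OF P B(1)] .
  have "disjnt (B - {w}) (\<Union>(P - {B}))"
    using partition_on_disjnt_other_blocks[OF P B(1)] by (auto simp: disjnt_def)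
  moreover have "V - {w} - (B - {w}) = V - B"
    using B by auto
  moreover have "B \<noteq> {w}"
    using B w by auto
  ultimately show ?thesis
    using rest B partition_onD1[OF P] by (auto simp: partition_on_insert)
qed

lemma inj_on_partition_on_insert_point:
  "inj_on (\<lambda>(Q, B). insert (insert w B) (Q - {B})) (SIGMA Q:{Q. partition_on (V - {w}) Q}. Q)"
proof (rule inj_onI, clarify)
  fix Q B Q' B'
  assume Q: "partition_on (V - {w}) Q" and Q': "partition_on (V - {w}) Q'" and "B \<in> Q" "B' \<in> Q'"
    and eq: "insert (insert w B) (Q - {B}) = insert (insert w B') (Q' - {B'})"
  have w_notin: "w \<notin> C" if "C \<in> Q \<union> Q'" for C
    using that partition_onD1[OF Q] partition_onD1[OF Q'] by auto
  have "insert w B = insert w B'"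
    using eq w_notin by blast
  moreover have "w \<notin> B" "w \<notin> B'"
    using w_notin \<open>B \<in> Q\<close> \<open>B' \<in> Q'\<close> by auto
  ultimately have "B = B'"
    by (metis Diff_insert_absorb)
  moreover have "Q - {B} = Q' - {B'}"
    using eq w_notin \<open>insert w B = insert w B'\<close> by blast
  ultimately show "Q = Q' \<and> B = B'"
    using \<open>B \<in> Q\<close> \<open>B' \<in> Q'\<close> by (metis insert_Diff)
qed

lemma obtain_partition_on_insert_point:
  assumes P: "partition_on V P" and w: "w \<in> V" "{w} \<notin> P"
  obtains Q B where "partition_on (V - {w}) Q" "B \<in> Q" "P = insert (insert w B) (Q - {B})"
proof -
  obtain B where B: "B \<in> P" "w \<in> B"
    using partition_onD1[OF P] w by blast
  have "B - {w} \<notin> P - {B}"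
  proof
    assume C: "B - {w} \<in> P - {B}"
    have "B \<noteq> {w}"
      using B w by auto
    then obtain z where "z \<in> B - {w}"
      using B(2) by blast
    then have "B - {w} = B"
      using partition_on_block_unique[OF P, of "B - {w}" B z] C B(1) by auto
    then show False
      using C by auto
  qed
  then have "insert (B - {w}) (P - {B}) - {B - {w}} = P - {B}"
    by auto
  moreover have "insert w (B - {w}) = B"
    using B(2) by auto
  ultimately have "P = insert (insert w (B - {w})) (insert (B - {w}) (P - {B}) - {B - {w}})"
    using B(1) by (simp add: insert_absorb)
  then show ?thesis
    by (rule that[OF partition_on_delete_point[OF P B w(2)], rotated]) simp
qed

lemma bij_betw_partition_on_insert_point:
  assumes w: "w \<in> V"
  shows "bij_betw (\<lambda>(Q, B). insert (insert w B) (Q - {B}))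
           (SIGMA Q:{Q. partition_on (V - {w}) Q}. Q) {P. partition_on V P \<and> {w} \<notin> P}"
  unfolding bij_betw_def
proof (intro conjI inj_on_partition_on_insert_point subset_antisym subsetI)
  fix P assume "P \<in> (\<lambda>(Q, B). insert (insert w B) (Q - {B})) ` (SIGMA Q:{Q. partition_on (V - {w}) Q}. Q)"
  then obtain Q B where Q: "partition_on (V - {w}) Q" and B: "B \<in> Q"
      and P: "P = insert (insert w B) (Q - {B})"
    by auto
  have "B \<noteq> {}" "w \<notin> B"
    using B partition_onD1[OF Q] partition_onD3[OF Q] by auto
  then have "{w} \<notin> P"
    using P B partition_onD1[OF Q] by auto
  then show "P \<in> {P. partition_on V P \<and> {w} \<notin> P}"
    using partition_on_insert_point[OF Q B w] P by simp
next
  fix P assume "P \<in> {P. partition_on V P \<and> {w} \<notin> P}"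
  then obtain Q B where "partition_on (V - {w}) Q" "B \<in> Q" and P: "P = insert (insert w B) (Q - {B})"
    using obtain_partition_on_insert_point[OF _ w] by auto
  then show "P \<in> (\<lambda>(Q, B). insert (insert w B) (Q - {B})) ` (SIGMA Q:{Q. partition_on (V - {w}) Q}. Q)"
    by (intro image_eqI[where x = "(Q, B)"]) simp_all
qed

lemma sum_partition_on_remove_point:
  fixes g :: "'a set set \<Rightarrow> 'b::comm_monoid_add"
  assumes V: "finite V" and w: "w \<in> V"
  shows "(\<Sum>P | partition_on V P. g P)
       = (\<Sum>Q | partition_on (V - {w}) Q. g (insert {w} Q) + (\<Sum>B\<in>Q. g (insert (insert w B) (Q - {B}))))"
proof -
  have fin: "finite {P. partition_on V P}" "finite {Q. partition_on (V - {w}) Q}"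
    using V by (simp_all add: finitely_many_partition_on)
  have "(\<Sum>P | partition_on V P. g P)
      = (\<Sum>P | partition_on V P \<and> {w} \<in> P. g P) + (\<Sum>P | partition_on V P \<and> {w} \<notin> P. g P)"
    using sum.Int_Diff[OF fin(1), of g "{P. {w} \<in> P}"] by (simp add: Int_def set_diff_eq conj_commute)
  also have "(\<Sum>P | partition_on V P \<and> {w} \<in> P. g P) = (\<Sum>Q | partition_on (V - {w}) Q. g (insert {w} Q))"
    using sum.reindex_bij_betw[OF bij_betw_partition_on_singleton[OF w], of g] by simp
  also have "(\<Sum>P | partition_on V P \<and> {w} \<notin> P. g P)
      = (\<Sum>(Q, B)\<in>(SIGMA Q:{Q. partition_on (V - {w}) Q}. Q). g (insert (insert w B) (Q - {B})))"
    using sum.reindex_bij_betw[OF bij_betw_partition_on_insert_point[OF w], of g]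
    by (simp add: case_prod_unfold)
  also have "\<dots> = (\<Sum>Q | partition_on (V - {w}) Q. \<Sum>B\<in>Q. g (insert (insert w B) (Q - {B})))"
    using fin(2) partition_on_minus_point(1)[OF V] by (subst sum.Sigma) auto
  finally show ?thesis
    by (simp add: sum.distrib)
qed

lemma sum_partition_on_block_containing:
  fixes G :: "nat \<Rightarrow> 'a set \<Rightarrow> 'a set set \<Rightarrow> 'b::comm_monoid_add"
  assumes U: "finite U" and j: "j \<in> U"
  shows "(\<Sum>Q | partition_on U Q. \<Sum>B\<in>Q. if j \<in> B then G (card Q) (B - {j}) (Q - {B}) else 0)
       = (\<Sum>Q | partition_on (U - {j}) Q. G (card Q + 1) {} Q + (\<Sum>B\<in>Q. G (card Q) B (Q - {B})))"
  unfolding sum_partition_on_remove_point[OF U j]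
proof (rule sum.cong[OF refl])
  fix Q assume "Q \<in> {Q. partition_on (U - {j}) Q}"
  then have Q: "partition_on (U - {j}) Q"
    by simp
  note facts = partition_on_minus_point[OF U Q]
  have singleton: "(\<Sum>B\<in>insert {j} Q. if j \<in> B then G (card (insert {j} Q)) (B - {j}) (insert {j} Q - {B}) else 0)
      = G (card Q + 1) {} Q"
    using facts by (simp add: insert_Diff_if)
  have grown: "(\<Sum>B\<in>insert (insert j B') (Q - {B'}). if j \<in> B
          then G (card (insert (insert j B') (Q - {B'}))) (B - {j}) (insert (insert j B') (Q - {B'}) - {B})
          else 0)
      = G (card Q) B' (Q - {B'})" if B': "B' \<in> Q" for B'
  proof -
    have "card (insert (insert j B') (Q - {B'})) = card Q"
      using facts B' card_Suc_Diff1[of Q B'] by simp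
    moreover have "(\<Sum>B\<in>Q - {B'}. if j \<in> B then G (card Q) (B - {j}) (insert (insert j B') (Q - {B'}) - {B}) else 0) = 0"
      using facts(3) by (intro sum.neutral) auto
    moreover have "insert (insert j B') (Q - {B'}) - {insert j B'} = Q - {B'}" "insert j B' - {j} = B'"
      using facts B' by auto
    ultimately show ?thesis
      using facts B' by simp
  qed
  show "(\<Sum>B\<in>insert {j} Q. if j \<in> B then G (card (insert {j} Q)) (B - {j}) (insert {j} Q - {B}) else 0)
      + (\<Sum>B'\<in>Q. \<Sum>B\<in>insert (insert j B') (Q - {B'}). if j \<in> B
          then G (card (insert (insert j B') (Q - {B'}))) (B - {j}) (insert (insert j B') (Q - {B'}) - {B})
          else 0)
      = G (card Q + 1) {} Q + (\<Sum>B\<in>Q. G (card Q) B (Q - {B}))"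
    unfolding singleton using grown by simp
qed

section \<open>Cumulants of the Gaussian integral\<close>

definition partition_mobius :: "nat \<Rightarrow> complex fps" where
  "partition_mobius k = of_int ((-1) ^ (k - 1) * fact (k - 1))"

definition gauss_block_prod :: "'a set set \<Rightarrow> ('a \<Rightarrow> cpoly_fps) \<Rightarrow> complex fps" where
  "gauss_block_prod P x = (\<Prod>I\<in>P. gauss_integral (\<Prod>i\<in>I. x i))"

definition gauss_cumulant :: "'a set \<Rightarrow> ('a \<Rightarrow> cpoly_fps) \<Rightarrow> complex fps" where
  "gauss_cumulant V x = (\<Sum>P | partition_on V P. partition_mobius (card P) * gauss_block_prod P x)"

definition cumulant_term :: "('a \<Rightarrow> cpoly_fps) \<Rightarrow> cpoly_fps \<Rightarrow> nat \<Rightarrow> 'a set \<Rightarrow> 'a set set \<Rightarrow> complex fps"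
  where "cumulant_term x a k C R = partition_mobius k * gauss_integral (a * (\<Prod>i\<in>C. x i)) * gauss_block_prod R x"

text \<open>The cumulant with the variable \<open>w\<close> replaced by \<open>a\<close>, expanded according to the block of \<open>w\<close>;
  it is visibly \<open>\<complex>[[\<hbar>]]\<close>-linear in \<open>a\<close>.\<close>
definition cumulant_expansion :: "'a set \<Rightarrow> 'a \<Rightarrow> ('a \<Rightarrow> cpoly_fps) \<Rightarrow> cpoly_fps \<Rightarrow> complex fps" where
  "cumulant_expansion V w x a = (\<Sum>Q | partition_on (V - {w}) Q.
      cumulant_term x a (card Q + 1) {} Q + (\<Sum>B\<in>Q. cumulant_term x a (card Q) B (Q - {B})))"

lemma partition_mobius_Suc:
  "1 \<le> k \<Longrightarrow> partition_mobius (k + 1) + of_nat k * partition_mobius k = 0"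
  by (cases k) (simp_all add: partition_mobius_def algebra_simps)

lemma gauss_block_prod_fun_upd:
  "(\<And>B. B \<in> Q \<Longrightarrow> w \<notin> B) \<Longrightarrow> gauss_block_prod Q (x(w := a)) = gauss_block_prod Q x"
  unfolding gauss_block_prod_def by (intro prod.cong refl arg_cong[where f = gauss_integral]) auto

lemma gauss_cumulant_fun_upd:
  assumes V: "finite V" and w: "w \<in> V"
  shows "gauss_cumulant V (x(w := a)) = cumulant_expansion V w x a"
  unfolding gauss_cumulant_def cumulant_expansion_def sum_partition_on_remove_point[OF V w]
proof (rule sum.cong[OF refl])
  fix Q assume "Q \<in> {Q. partition_on (V - {w}) Q}"
  then have Q: "partition_on (V - {w}) Q"
    by simp
  note facts = partition_on_minus_point[OF V Q]
  have rest: "gauss_block_prod R (x(w := a)) = gauss_block_prod R x" if "R \<subseteq> Q" for R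
    using that facts by (intro gauss_block_prod_fun_upd) auto
  have "partition_mobius (card (insert {w} Q)) * gauss_block_prod (insert {w} Q) (x(w := a))
      = cumulant_term x a (card Q + 1) {} Q"
    using facts rest[of Q] by (simp add: cumulant_term_def gauss_block_prod_def mult.assoc)
  moreover have "partition_mobius (card (insert (insert w B) (Q - {B})))
        * gauss_block_prod (insert (insert w B) (Q - {B})) (x(w := a))
      = cumulant_term x a (card Q) B (Q - {B})" if B: "B \<in> Q" for B
  proof -
    have "card (insert (insert w B) (Q - {B})) = card Q"
      using facts B card_Suc_Diff1[of Q B] by simp
    moreover have "(\<Prod>i\<in>B. (x(w := a)) i) = (\<Prod>i\<in>B. x i)"
      using facts(3)[OF B] by (intro prod.cong) auto
    ultimately show ?thesis
      using facts B rest[of "Q - {B}"] by (simp add: cumulant_term_def gauss_block_prod_def mult.assoc)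
  qed
  ultimately show "partition_mobius (card (insert {w} Q)) * gauss_block_prod (insert {w} Q) (x(w := a))
      + (\<Sum>B\<in>Q. partition_mobius (card (insert (insert w B) (Q - {B})))
                 * gauss_block_prod (insert (insert w B) (Q - {B})) (x(w := a)))
      = cumulant_term x a (card Q + 1) {} Q + (\<Sum>B\<in>Q. cumulant_term x a (card Q) B (Q - {B}))"
    by simp
qed

lemma cumulant_term_add:
  "cumulant_term x (a + b) k C R = cumulant_term x a k C R + cumulant_term x b k C R"
  by (simp add: cumulant_term_def distrib_right gauss_integral_add algebra_simps)

lemma cumulant_expansion_add:
  "cumulant_expansion V w x (a + b) = cumulant_expansion V w x a + cumulant_expansion V w x b"
  by (simp add: cumulant_expansion_def cumulant_term_add sum.distrib add_ac)

lemma cumulant_term_const_poly_mult: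
  "cumulant_term x (const_poly_fps c * a) k C R = c * cumulant_term x a k C R"
  unfolding cumulant_term_def mult.assoc gauss_integral_const_poly_mult by (simp add: mult_ac)

lemma cumulant_expansion_const_poly_mult:
  "cumulant_expansion V w x (const_poly_fps c * a) = c * cumulant_expansion V w x a"
  by (simp add: cumulant_expansion_def cumulant_term_const_poly_mult sum_distrib_left distrib_left)

lemma cumulant_expansion_1:
  assumes V: "finite V" and nonempty: "V - {w} \<noteq> {}"
  shows "cumulant_expansion V w x 1 = 0"
  unfolding cumulant_expansion_def
proof (rule sum.neutral, rule ballI)
  fix Q assume "Q \<in> {Q. partition_on (V - {w}) Q}"
  then have Q: "partition_on (V - {w}) Q"
    by simp
  note facts = partition_on_minus_point[OF V Q]
  have "(\<Sum>B\<in>Q. cumulant_term x 1 (card Q) B (Q - {B}))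
      = (\<Sum>B\<in>Q. partition_mobius (card Q) * gauss_block_prod Q x)"
    using facts(1) by (intro sum.cong refl) (simp add: cumulant_term_def gauss_block_prod_def prod.remove)
  then have "cumulant_term x 1 (card Q + 1) {} Q + (\<Sum>B\<in>Q. cumulant_term x 1 (card Q) B (Q - {B}))
      = (partition_mobius (card Q + 1) + of_nat (card Q) * partition_mobius (card Q)) * gauss_block_prod Q x"
    by (simp add: cumulant_term_def algebra_simps)
  moreover have "1 \<le> card Q"
    using facts(1) partition_onD1[OF Q] nonempty by (auto simp: Suc_le_eq card_gt_0_iff)
  ultimately show "cumulant_term x 1 (card Q + 1) {} Q + (\<Sum>B\<in>Q. cumulant_term x 1 (card Q) B (Q - {B})) = 0"
    using partition_mobius_Suc by simp
qed

lemma cumulant_term_t_mult: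
  assumes "finite C"
  shows "cumulant_term x (t_fps * Y) k C R
       = - fps_X * (cumulant_term x (tderiv Y) k C R
                    + (\<Sum>j\<in>C. cumulant_term x (Y * tderiv (x j)) k (C - {j}) R))"
  unfolding cumulant_term_def gauss_integral_t_mult_prod[OF assms]
  by (simp add: sum_distrib_left sum_distrib_right algebra_simps)

lemma sum_partition_on_blocks_swap:
  assumes "finite U"
  shows "(\<Sum>Q | partition_on U Q. \<Sum>B\<in>Q. \<Sum>j\<in>B. F Q B j)
       = (\<Sum>j\<in>U. \<Sum>Q | partition_on U Q. \<Sum>B\<in>Q. if j \<in> B then F Q B j else 0)"
proof -
  have inner: "(\<Sum>j\<in>B. F Q B j) = (\<Sum>j\<in>U. if j \<in> B then F Q B j else 0)"
    if "partition_on U Q" "B \<in> Q" for Q B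
  proof -
    have "B \<subseteq> U"
      using that partition_onD1 by blast
    then show ?thesis
      using assms by (simp add: sum.inter_restrict[symmetric] Int_absorb1)
  qed
  have "(\<Sum>Q | partition_on U Q. \<Sum>B\<in>Q. \<Sum>j\<in>B. F Q B j)
      = (\<Sum>Q | partition_on U Q. \<Sum>B\<in>Q. \<Sum>j\<in>U. if j \<in> B then F Q B j else 0)"
    by (rule sum.cong[OF refl], rule sum.cong[OF refl]) (simp add: inner)
  also have "\<dots> = (\<Sum>Q | partition_on U Q. \<Sum>j\<in>U. \<Sum>B\<in>Q. if j \<in> B then F Q B j else 0)"
    by (intro sum.cong refl sum.swap)
  also have "\<dots> = (\<Sum>j\<in>U. \<Sum>Q | partition_on U Q. \<Sum>B\<in>Q. if j \<in> B then F Q B j else 0)"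
    by (rule sum.swap)
  finally show ?thesis .
qed

text \<open>Integration by parts in the slot \<open>w\<close>: the derivative falls either on the remaining
  factor \<open>Y\<close> or on a variable \<open>x j\<close> of the block of \<open>w\<close>, which is then absorbed into the
  slot of \<open>w\<close>.\<close>
lemma cumulant_expansion_t_mult:
  assumes V: "finite V" and w: "w \<in> V"
  shows "cumulant_expansion V w x (t_fps * Y)
       = - fps_X * (cumulant_expansion V w x (tderiv Y)
                    + (\<Sum>j\<in>V - {w}. cumulant_expansion (V - {j}) w x (Y * tderiv (x j))))"
proof -
  define F where "F Q B j = cumulant_term x (Y * tderiv (x j)) (card Q) (B - {j}) (Q - {B})" for Q B j
  have per_partition:
    "cumulant_term x (t_fps * Y) (card Q + 1) {} Q + (\<Sum>B\<in>Q. cumulant_term x (t_fps * Y) (card Q) B (Q - {B}))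
      = - fps_X * (cumulant_term x (tderiv Y) (card Q + 1) {} Q
                   + (\<Sum>B\<in>Q. cumulant_term x (tderiv Y) (card Q) B (Q - {B})) + (\<Sum>B\<in>Q. \<Sum>j\<in>B. F Q B j))"
    if Q: "partition_on (V - {w}) Q" for Q
  proof -
    have "(\<Sum>B\<in>Q. cumulant_term x (t_fps * Y) (card Q) B (Q - {B}))
        = (\<Sum>B\<in>Q. - fps_X * (cumulant_term x (tderiv Y) (card Q) B (Q - {B}) + (\<Sum>j\<in>B. F Q B j)))"
      using partition_on_minus_point(2)[OF V Q] by (intro sum.cong refl) (simp add: cumulant_term_t_mult F_def)
    also have "\<dots> = - fps_X * ((\<Sum>B\<in>Q. cumulant_term x (tderiv Y) (card Q) B (Q - {B}))
                                + (\<Sum>B\<in>Q. \<Sum>j\<in>B. F Q B j))"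
      by (simp only: sum.distrib sum_distrib_left distrib_left)
    finally show ?thesis
      by (simp only: cumulant_term_t_mult[OF finite.emptyI] sum.empty add_0_right distrib_left add.assoc)
  qed
  have "cumulant_expansion V w x (t_fps * Y)
      = (\<Sum>Q | partition_on (V - {w}) Q. - fps_X * (cumulant_term x (tderiv Y) (card Q + 1) {} Q
           + (\<Sum>B\<in>Q. cumulant_term x (tderiv Y) (card Q) B (Q - {B})) + (\<Sum>B\<in>Q. \<Sum>j\<in>B. F Q B j)))"
    unfolding cumulant_expansion_def by (rule sum.cong[OF refl]) (simp only: mem_Collect_eq per_partition)
  also have "\<dots> = - fps_X * (cumulant_expansion V w x (tderiv Y)
                   + (\<Sum>Q | partition_on (V - {w}) Q. \<Sum>B\<in>Q. \<Sum>j\<in>B. F Q B j))"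
    by (simp only: cumulant_expansion_def sum.distrib sum_distrib_left distrib_left)
  also have "(\<Sum>Q | partition_on (V - {w}) Q. \<Sum>B\<in>Q. \<Sum>j\<in>B. F Q B j)
      = (\<Sum>j\<in>V - {w}. cumulant_expansion (V - {j}) w x (Y * tderiv (x j)))"
  proof -
    have "V - {w} - {j} = V - {j} - {w}" for j
      by auto
    then show ?thesis
      unfolding sum_partition_on_blocks_swap[OF finite_Diff[OF V]] F_def
      by (simp add: sum_partition_on_block_containing[OF finite_Diff[OF V]] cumulant_expansion_def)
  qed
  finally show ?thesis .
qed

lemma pCons_coeff_0_poly_shift: "pCons (coeff p 0) (poly_shift 1 p) = p"
  by (rule poly_eqI) (simp add: coeff_pCons coeff_poly_shift split: nat.split)

lemma cpoly_fps_t_decompose: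
  "const_poly_fps (Abs_fps (\<lambda>n. coeff (fps_nth Z n) 0)) + t_fps * Abs_fps (\<lambda>n. poly_shift 1 (fps_nth Z n))
     = Z"
proof (rule fps_ext)
  fix n
  have "fps_nth (const_poly_fps (Abs_fps (\<lambda>n. coeff (fps_nth Z n) 0))
                 + t_fps * Abs_fps (\<lambda>n. poly_shift 1 (fps_nth Z n))) n
      = pCons (coeff (fps_nth Z n) 0) (poly_shift 1 (fps_nth Z n))"
    by (simp add: const_poly_fps_def t_fps_def)
  then show "fps_nth (const_poly_fps (Abs_fps (\<lambda>n. coeff (fps_nth Z n) 0))
                      + t_fps * Abs_fps (\<lambda>n. poly_shift 1 (fps_nth Z n))) n = fps_nth Z n"
    by (simp only: pCons_coeff_0_poly_shift)
qed

lemma gauss_cumulant_recursion: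
  assumes V: "finite V" and card: "1 < card V"
  obtains w Y where "w \<in> V"
    "gauss_cumulant V x = - fps_X * (gauss_cumulant V (x(w := tderiv Y))
       + (\<Sum>j\<in>V - {w}. gauss_cumulant (V - {j}) (x(w := Y * tderiv (x j)))))"
proof -
  obtain w where w: "w \<in> V"
    using card by fastforce
  have "card (V - {w}) \<noteq> 0"
    using card w by simp
  then have nonempty: "V - {w} \<noteq> {}"
    by (metis card.empty)
  define c where "c = Abs_fps (\<lambda>n. coeff (fps_nth (x w) n) 0)"
  define Y where "Y = Abs_fps (\<lambda>n. poly_shift 1 (fps_nth (x w) n))"
  have upd: "cumulant_expansion (V - {j}) w x (Y * tderiv (x j))
      = gauss_cumulant (V - {j}) (x(w := Y * tderiv (x j)))" if "j \<in> V - {w}" for j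
  proof -
    have "w \<in> V - {j}"
      using that w by auto
    then show ?thesis
      using gauss_cumulant_fun_upd[OF finite_Diff[OF V]] by simp
  qed
  have "gauss_cumulant V x = cumulant_expansion V w x (x w)"
    using gauss_cumulant_fun_upd[OF V w, of x "x w"] by simp
  also have "\<dots> = c * cumulant_expansion V w x 1 + cumulant_expansion V w x (t_fps * Y)"
    by (subst cpoly_fps_t_decompose[symmetric])
      (simp add: c_def Y_def cumulant_expansion_add flip: cumulant_expansion_const_poly_mult)
  also have "\<dots> = - fps_X * (gauss_cumulant V (x(w := tderiv Y))
                    + (\<Sum>j\<in>V - {w}. gauss_cumulant (V - {j}) (x(w := Y * tderiv (x j)))))"
    using upd by (simp add: cumulant_expansion_1[OF V nonempty] cumulant_expansion_t_mult[OF V w]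
        gauss_cumulant_fun_upd[OF V w])
  finally show ?thesis
    using w that by blast
qed

theorem gauss_cumulant_nth_eq_0:
  "finite V \<Longrightarrow> N + 1 < card V \<Longrightarrow> fps_nth (gauss_cumulant V x) N = 0"
proof (induction N arbitrary: V x)
  case (0 V x)
  then have "1 < card V"
    by simp
  then obtain w Y where
    "gauss_cumulant V x = - fps_X * (gauss_cumulant V (x(w := tderiv Y))
       + (\<Sum>j\<in>V - {w}. gauss_cumulant (V - {j}) (x(w := Y * tderiv (x j)))))"
    using gauss_cumulant_recursion[OF "0.prems"(1), where x = x] by blast
  then show ?case
    by simp
next
  case (Suc N V x)
  then have "1 < card V"
    by simp
  then obtain w Y where w: "w \<in> V" and rec:
    "gauss_cumulant V x = - fps_X * (gauss_cumulant V (x(w := tderiv Y))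
       + (\<Sum>j\<in>V - {w}. gauss_cumulant (V - {j}) (x(w := Y * tderiv (x j)))))"
    using gauss_cumulant_recursion[OF Suc.prems(1), where x = x] by blast
  have "fps_nth (gauss_cumulant (V - {j}) (x(w := Y * tderiv (x j)))) N = 0" if "j \<in> V - {w}" for j
    using Suc.IH[of "V - {j}"] Suc.prems that by simp
  moreover have "fps_nth (gauss_cumulant V (x(w := tderiv Y))) N = 0"
    using Suc.IH Suc.prems by simp
  ultimately show ?case
    unfolding rec by (simp add: fps_sum_nth)
qed

section \<open>The morphism \<open>f\<close>\<close>

lemma ad_seq_zero_operator: "ad_seq (*) (\<lambda>_. 0) e al d j = (\<lambda>_. 0 :: 'a::ring)"
  by (induction j) auto

lemma bv_inf_alg_B: "bv_inf_alg (*) (1::complex fps) homB hdvdB (*) DeltaB"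
  unfolding bv_inf_alg_def DeltaB_def by (simp add: homB_def hdvdB_def ad_seq_zero_operator)

lemma fun_part_block_prod: "fun_part (block_prod mulAh oneAh I al) = (\<Prod>i\<in>I. fun_part (al i))"
proof -
  have foldr: "fun_part (foldr (\<lambda>i. mulAh (al i)) xs oneAh) = (\<Prod>i\<leftarrow>xs. fun_part (al i))" for xs
    by (induction xs) (simp_all add: fun_part_mulAh)
  show ?thesis
  proof (cases "finite I")
    case True
    then show ?thesis
      by (simp add: block_prod_def foldr prod.distinct_set_conv_list[symmetric])
  qed (simp add: block_prod_def)
qed

lemma koszul_sign_even: "\<forall>i<n. even (d i) \<Longrightarrow> koszul_sign n P d = 1"
proof -
  assume "\<forall>i<n. even (d i)"
  then have no_odd_pairs:
    "{(i, j). i < j \<and> j < n \<and> odd (d i) \<and> odd (d j) \<and> Min (blk P j) < Min (blk P i)} = {}"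
    by auto
  show ?thesis
    unfolding koszul_sign_def no_odd_pairs by simp
qed

lemma cumulant_fA:
  "cumulant mulAh oneAh fA n al d
     = (\<Sum>P | partition_on {..<n} P. of_int ((-1) ^ (card P - 1) * fact (card P - 1) * koszul_sign n P d)
          * gauss_block_prod P (\<lambda>i. fun_part (al i)))"
  unfolding cumulant_def gauss_block_prod_def fA_eq_gauss_integral fun_part_block_prod ..

lemma cumulant_fA_degree_0:
  "\<forall>i<n. d i = 0 \<Longrightarrow> cumulant mulAh oneAh fA n al d = gauss_cumulant {..<n} (\<lambda>i. fun_part (al i))"
  unfolding cumulant_fA gauss_cumulant_def partition_mobius_def by (simp add: koszul_sign_even)

lemma cumulant_fA_fun_part_0:
  assumes "i < n" "fun_part (al i) = 0"
  shows "cumulant mulAh oneAh fA n al d = 0"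
  unfolding cumulant_fA
proof (rule sum.neutral, rule ballI)
  fix P assume "P \<in> {P. partition_on {..<n} P}"
  then have P: "partition_on {..<n} P"
    by simp
  obtain I where I: "I \<in> P" "i \<in> I"
    using partition_onD1[OF P] assms(1) by blast
  have "finite I"
    using partition_onD1[OF P] I(1) by (metis Union_upper finite_lessThan finite_subset)
  then have "(\<Prod>j\<in>I. fun_part (al j)) = 0"
    using I(2) assms(2) by (intro prod_zero) auto
  then have "gauss_integral (\<Prod>j\<in>I. fun_part (al j)) = 0"
    by simp
  then have "gauss_block_prod P (\<lambda>i. fun_part (al i)) = 0"
    using finite_elements[OF _ P] I(1) by (auto simp: gauss_block_prod_def prod_zero_iff)
  then show "of_int ((-1) ^ (card P - 1) * fact (card P - 1) * koszul_sign n P d)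
      * gauss_block_prod P (\<lambda>i. fun_part (al i)) = 0"
    by simp
qed

lemma hdvdB_cumulant_fA:
  assumes "2 \<le> n" "\<forall>i<n. homA (d i) (al i)"
  shows "hdvdB (n - 1) (cumulant mulAh oneAh fA n al d)"
proof (cases "\<forall>i<n. d i = 0")
  case True
  then show ?thesis
    using assms(1) by (auto simp: hdvdB_def cumulant_fA_degree_0 gauss_cumulant_nth_eq_0)
next
  case False
  then obtain i where "i < n" "d i \<noteq> 0"
    by auto
  then have "fun_part (al i) = 0"
    using assms(2) by (auto simp: homA_iff_pair_hom pair_hom_def Ah_to_pair_def)
  then show ?thesis
    using \<open>i < n\<close> by (simp add: hdvdB_def cumulant_fA_fun_part_0)
qed

lemma bv_inf_mor_fA: "bv_inf_mor mulAh oneAh homA scAh DeltaA homB hdvdB (*) DeltaB fA"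
  unfolding bv_inf_mor_def
proof (intro conjI allI impI)
  show "fA (scAh p x) = p * fA x" for p x
    by (simp add: fA_eq_gauss_integral fun_part_scAh gauss_integral_const_poly_mult)
  show "fA (x + y) = fA x + fA y" for x y
    by (simp add: fA_eq_gauss_integral fun_part_add gauss_integral_add)
  show "homB d (fA x)" if "homA d x" for d x
    using that by (auto simp: homA_iff_pair_hom pair_hom_def Ah_to_pair_def homB_def fA_eq_gauss_integral)
  show "fA oneAh = 1"
    by (simp add: fA_eq_gauss_integral)
  show "fA (DeltaA x) = DeltaB (fA x)" for x
    by (simp add: fA_eq_gauss_integral fun_part_DeltaA gauss_integral_add gauss_integral_t_mult
        gauss_integral_X_mult DeltaB_def)
  show "hdvdB (n - 1) (cumulant mulAh oneAh fA n al d)" if "2 \<le> n" "\<forall>i<n. homA (d i) (al i)" for n al d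
    using that by (rule hdvdB_cumulant_fA)
qed

lemma quasi_iso0_f0: "quasi_iso0 Delta0 (\<lambda>_::complex. 0) (f_i 0)"
  unfolding quasi_iso0_def
proof (intro conjI allI impI)
  show "f_i 0 (x + y) = f_i 0 x + f_i 0 y" for x y
    by (simp add: f_i_def dfact_odd_def)
  show "f_i 0 (Delta0 a) = 0" for a
    by (simp add: f_i_def Delta0_def)
  show "a \<in> range Delta0" if "Delta0 a = 0 \<and> f_i 0 a \<in> range (\<lambda>_. 0)" for a
  proof -
    have "snd a = 0" "coeff (fst a) 0 = 0"
      using that by (auto simp: Delta0_def f_i_def dfact_odd_def zero_prod_def)
    then have "a = Delta0 (0, poly_shift 1 (fst a))"
      using pCons_coeff_0_poly_shift[of "fst a"] by (simp add: Delta0_def prod_eq_iff)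
    then show ?thesis
      by blast
  qed
  show "\<exists>a. Delta0 a = 0 \<and> b - f_i 0 a \<in> range (\<lambda>_. 0)" for b
    by (rule exI[of _ "([:b:], 0)"]) (simp add: Delta0_def f_i_def dfact_odd_def zero_prod_def)
qed

lemma fps_neg_nth [simp]: "fps_nth (fps_neg p) n = (-1) ^ n * fps_nth p n"
  by (simp add: fps_neg_def)

lemma fps_neg_add: "fps_neg (p + q) = fps_neg p + fps_neg q"
  by (rule fps_ext) (simp add: distrib_left)

lemma fps_neg_0 [simp]: "fps_neg 0 = 0"
  by (rule fps_ext) simp

lemma fps_neg_sum: "fps_neg (\<Sum>i\<in>S. p i) = (\<Sum>i\<in>S. fps_neg (p i))"
  by (induction S rule: infinite_finite_induct) (simp_all add: fps_neg_add)

lemma fps_neg_mult: "fps_neg (p * q) = fps_neg p * fps_neg q"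
proof (rule fps_ext)
  fix n
  have "(-1) ^ n * (fps_nth p i * fps_nth q (n - i))
      = (-1) ^ i * fps_nth p i * ((-1) ^ (n - i) * fps_nth q (n - i))" if "i \<in> {0..n}" for i
  proof -
    have "(-1::complex) ^ n = (-1) ^ i * (-1) ^ (n - i)"
      using that by (simp flip: power_add)
    then show ?thesis
      by simp
  qed
  then have "(\<Sum>i = 0..n. (-1) ^ n * (fps_nth p i * fps_nth q (n - i)))
      = (\<Sum>i = 0..n. (-1) ^ i * fps_nth p i * ((-1) ^ (n - i) * fps_nth q (n - i)))"
    by (rule sum.cong[OF refl])
  then show "fps_nth (fps_neg (p * q)) n = fps_nth (fps_neg p * fps_neg q) n"
    by (simp add: fps_mult_nth sum_distrib_left)
qed

lemma fps_neg_const [simp]: "fps_neg (fps_const c) = fps_const c"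
  by (rule fps_ext) simp

lemma fps_neg_X_power: "fps_neg (fps_X ^ i) = fps_const ((-1) ^ i) * fps_X ^ i"
  by (rule fps_ext) (simp add: fps_X_power_nth)

lemma sum_atMost_double_split_parity:
  "(\<Sum>a\<le>2 * N. f a) = (\<Sum>i\<le>N. f (2 * i)) + (\<Sum>i<N. f (2 * i + 1))" for N :: nat
proof (induction N)
  case (Suc N)
  have "{..2 * Suc N} = insert (2 * N + 2) (insert (2 * N + 1) {..2 * N})"
    by auto
  then show ?case
    using Suc by (simp add: add_ac)
qed simp

definition gauss_monomial :: "nat \<Rightarrow> complex fps" where
  "gauss_monomial a = (if even a then fps_const (gauss_moment (a div 2)) * fps_X ^ (a div 2) else 0)"

lemma gauss_integral_nth_eq_monomials:
  "k \<le> N \<Longrightarrow> fps_nth (gauss_integral Z) k = fps_nth (\<Sum>a\<le>2 * N. tcoeff_fps a Z * gauss_monomial a) k"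
  unfolding gauss_integral_nth_eq_truncation sum_atMost_double_split_parity gauss_monomial_def
  by (simp add: mult_ac)

lemma gauss_monomial_pair: "gauss_monomial a * fps_neg (gauss_monomial b) = mono_pair a b"
proof (cases "even a \<and> even b")
  case True
  define i j where "i = a div 2" and "j = b div 2"
  have "(-1::complex) ^ j * (-1) ^ j = 1"
    by (simp flip: power_mult_distrib)
  then have scalar:
    "gauss_moment i * gauss_moment j * (-1) ^ j = (-1) ^ i * of_nat (dfact_odd i * dfact_odd j)"
    by (simp add: gauss_moment_def algebra_simps)
  have "gauss_monomial a * fps_neg (gauss_monomial b)
      = fps_const (gauss_moment i) * fps_X ^ i * (fps_const (gauss_moment j) * (fps_const ((-1) ^ j) * fps_X ^ j))"
    using True unfolding gauss_monomial_def i_def j_def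
    by (simp only: if_True fps_neg_mult fps_neg_const fps_neg_X_power)
  also have "\<dots> = fps_const (gauss_moment i * gauss_moment j * (-1) ^ j) * fps_X ^ (i + j)"
    unfolding power_add fps_const_mult[symmetric] by algebra
  finally show ?thesis
    using True unfolding scalar by (simp add: mono_pair_def i_def j_def)
next
  case False
  then show ?thesis
    by (auto simp: gauss_monomial_def mono_pair_def)
qed

lemma tcoeff_eq_tcoeff_fps: "tcoeff X a = tcoeff_fps a (fun_part X)"
  by (rule fps_ext) (simp add: tcoeff_def)

lemma pairB_fA: "pairB (fA X) (fA Y) = pairA X Y"
proof (rule fps_ext)
  fix N
  define trunc where "trunc W = (\<Sum>a\<le>2 * N. tcoeff_fps a (fun_part W) * gauss_monomial a)" for W
  have "fps_nth (pairB (fA X) (fA Y)) N = fps_nth (trunc X * fps_neg (trunc Y)) N"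
    unfolding pairB_def fA_eq_gauss_integral
    by (rule fps_mult_nth_cong) (simp_all add: trunc_def gauss_integral_nth_eq_monomials)
  also have "trunc X * fps_neg (trunc Y)
      = (\<Sum>a\<le>2 * N. \<Sum>b\<le>2 * N. tcoeff X a * (gauss_monomial a * fps_neg (gauss_monomial b))
                                    * fps_neg (tcoeff Y b))"
    by (simp add: trunc_def fps_neg_sum fps_neg_mult sum_product tcoeff_eq_tcoeff_fps mult_ac)
  also have "fps_nth \<dots> N = fps_nth (pairA X Y) N"
    by (simp add: pairA_def gauss_monomial_pair fps_sum_nth)
  finally show "fps_nth (pairB (fA X) (fA Y)) N = fps_nth (pairA X Y) N" .
qed

theorem mainTheorem4:
  shows "bv_inf_alg mulAh oneAh homA hdvdA scAh DeltaA
       \<and> bv_inf_alg (*) (1::complex fps) homB hdvdB (*) DeltaB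
       \<and> bv_inf_mor mulAh oneAh homA scAh DeltaA homB hdvdB (*) DeltaB fA
       \<and> quasi_iso0 Delta0 (\<lambda>_::complex. 0) (f_i 0)
       \<and> (\<forall>X Y. DeltaA X = 0 \<longrightarrow> DeltaA Y = 0 \<longrightarrow> pairB (fA X) (fA Y) = pairA X Y)"
  using bv_inf_alg_A bv_inf_alg_B bv_inf_mor_fA quasi_iso0_f0 pairB_fA by blast

end
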